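(* For every $w\in H^1(0,T)$, $\|\mathcal P_\tau w\|_{C^0[0,T]}\le C\|w\|_{C^0[0,T]}$, where $C>0$ is independent of the partition (in particular of the time steps).
   Context: Let $T>0$, $q\ge1$ an integer, and $0=t_0<t_1<\dots<t_N=T$ a partition of $(0,T)$ with $I_n=(t_{n-1},t_n)$. Let $\mathcal V_\tau^q=\{v\in C^0[0,T]: v|_{I_n}\in\mathbb P^q(I_n),\ n=1,\dots,N\}$. The projection $\mathcal P_\tau:H^1(0,T)\to\mathcal V_\tau^q$ is defined for $w\in H^1(0,T)$ as the unique element of $\mathcal V_\tau^q$ with $\mathcal P_\tau w(0)=w(0)$ and $\int_{I_n}((\mathcal P_\tau w)'-w')\,p_{q-1}\,dt=0$ for all $p_{q-1}\in\mathbb P^{q-1}(I_n)$, $n=1,\dots,N$. The constant $C$ may depend on $q$. *)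

theory Defs
  imports "HOL-Analysis.Analysis" "HOL-Computational_Algebra.Polynomial"
begin

definition is_partition :: "real \<Rightarrow> nat \<Rightarrow> (nat \<Rightarrow> real) \<Rightarrow> bool" where
  "is_partition T N t \<longleftrightarrow> N \<ge> 1 \<and> t 0 = 0 \<and> t N = T \<and> (\<forall>n<N. t n < t (Suc n))"

text \<open>g is the (weak) derivative of w on (0,T): g in L^2(0,T) and
  w(x) = w(0) + int_0^x g for x in [0,T] (continuous representative of an H^1 function).\<close>
definition weak_deriv_on :: "real \<Rightarrow> (real \<Rightarrow> real) \<Rightarrow> (real \<Rightarrow> real) \<Rightarrow> bool" where
  "weak_deriv_on T w g \<longleftrightarrow>
     g absolutely_integrable_on {0..T} \<and> (\<lambda>s. (g s)\<^sup>2) integrable_on {0..T} \<and>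
     (\<forall>x\<in>{0..T}. w x = w 0 + integral {0..x} g)"

definition H1 :: "real \<Rightarrow> (real \<Rightarrow> real) \<Rightarrow> bool" where
  "H1 T w \<longleftrightarrow> (\<exists>g. weak_deriv_on T w g)"

definition Vtau :: "nat \<Rightarrow> real \<Rightarrow> nat \<Rightarrow> (nat \<Rightarrow> real) \<Rightarrow> (real \<Rightarrow> real) set" where
  "Vtau q T N t = {v. continuous_on {0..T} v \<and>
     (\<forall>n\<in>{1..N}. \<exists>p :: real poly. degree p \<le> q \<and> (\<forall>s\<in>{t (n - 1)..t n}. v s = poly p s))}"

text \<open>The defining conditions of P_tau w; v is normalised to 0 outside [0,T]
  so that the element is unique as a function on the reals.\<close>
definition is_Ptau :: "nat \<Rightarrow> real \<Rightarrow> nat \<Rightarrow> (nat \<Rightarrow> real) \<Rightarrow> (real \<Rightarrow> real) \<Rightarrow> (real \<Rightarrow> real) \<Rightarrow> bool" where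
  "is_Ptau q T N t w v \<longleftrightarrow>
     v \<in> Vtau q T N t \<and> (\<forall>s. s \<notin> {0..T} \<longrightarrow> v s = 0) \<and> v 0 = w 0 \<and>
     (\<forall>g. weak_deriv_on T w g \<longrightarrow>
        (\<forall>n\<in>{1..N}. \<forall>r :: real poly. degree r \<le> q - 1 \<longrightarrow>
           integral {t (n - 1)..t n} (\<lambda>s. (deriv v s - g s) * poly r s) = 0))"

definition Ptau :: "nat \<Rightarrow> real \<Rightarrow> nat \<Rightarrow> (nat \<Rightarrow> real) \<Rightarrow> (real \<Rightarrow> real) \<Rightarrow> (real \<Rightarrow> real)" where
  "Ptau q T N t w = (THE v. is_Ptau q T N t w v)"

definition C0norm :: "real \<Rightarrow> (real \<Rightarrow> real) \<Rightarrow> real" where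
  "C0norm T f = (SUP s\<in>{0..T}. \<bar>f s\<bar>)"

end

theory Submission
  imports Defs
begin

text \<open>On each interval I = [t(n-1), t n] of length h the derivative of the projection is the
  L2(I)-projection of w' onto the polynomials of degree < q; testing with the constant 1 shows that
  the projection interpolates w at the nodes, so on I it equals w(t(n-1)) plus the integral of that
  local projection. To bound this integral uniformly in h, expand the local projection in an
  orthogonal basis of degree < q polynomials on [0,1], transported affinely to I. The coefficient
  of a transported basis polynomial R is the integral of w' R divided by h times a fixed norm, and
  integration by parts writes that integral as R(t n) (w(t n) - w(t(n-1))) minus the integral of
  R' (w - w(t(n-1))): it is bounded by a multiple of max |w| because R is bounded and R' is
  O(1/h), while the integral of R over a subinterval of I is O(h).

  Since w is merely an indefinite integral of an integrable function, the integration by parts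
  rests on the observation that its defect is additive over adjacent intervals and o(y - x) on
  [x,y], hence zero.\<close>

section \<open>Integrals of polynomials\<close>

lemma poly_antiderivative_exists:
  fixes p :: "'a::field_char_0 poly"
  obtains P where "pderiv P = p" "degree P \<le> Suc (degree p)"
proof
  let ?P = "\<Sum>i\<le>degree p. monom (coeff p i / of_nat (Suc i)) (Suc i)"
  have "pderiv ?P = (\<Sum>i\<le>degree p. pderiv (monom (coeff p i / of_nat (Suc i)) (Suc i)))"
    using higher_pderiv_sum[of 1] by simp
  also have "\<dots> = (\<Sum>i\<le>degree p. monom (coeff p i) i)"
    by (intro sum.cong) (simp_all add: pderiv_monom del: of_nat_Suc)
  finally show "pderiv ?P = p"
    by (simp add: poly_as_sum_of_monoms)
  show "degree ?P \<le> Suc (degree p)"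
    by (rule degree_sum_le) (auto intro: order_trans[OF degree_monom_le])
qed

definition poly_integral :: "real \<Rightarrow> real \<Rightarrow> real poly \<Rightarrow> real" where
  "poly_integral a b p = integral {a..b} (poly p)"

lemma continuous_on_poly' [continuous_intros]: "continuous_on S (poly p)"
  for p :: "'a::{real_normed_field} poly"
  by (rule continuous_on_poly[OF continuous_on_id, unfolded id_def])

lemma integrable_on_poly [simp]: "poly p integrable_on {a..b::real}"
  by (intro integrable_continuous_interval continuous_intros)

lemma poly_integral_pderiv:
  fixes p :: "real poly"
  assumes "a \<le> b"
  shows "poly_integral a b (pderiv p) = poly p b - poly p a"
proof -
  have "(poly (pderiv p) has_integral poly p b - poly p a) {a..b}"
    using assms
    by (intro fundamental_theorem_of_calculus)
       (auto simp: has_real_derivative_iff_has_vector_derivative[symmetric]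
             intro: has_field_derivative_at_within)
  then show ?thesis
    unfolding poly_integral_def by (rule integral_unique)
qed

lemma poly_integral_add: "poly_integral a b (p + r) = poly_integral a b p + poly_integral a b r"
  unfolding poly_integral_def poly_add by (rule integral_add) simp_all

lemma poly_integral_diff: "poly_integral a b (p - r) = poly_integral a b p - poly_integral a b r"
  unfolding poly_integral_def poly_diff by (rule integral_diff) simp_all

lemma poly_integral_smult: "poly_integral a b (smult c p) = c * poly_integral a b p"
  unfolding poly_integral_def poly_smult by (rule integral_mult_right)

lemma poly_integral_0 [simp]: "poly_integral a b 0 = 0"
  by (simp add: poly_integral_def poly_0[abs_def])

lemma poly_integral_sum:
  "finite A \<Longrightarrow> poly_integral a b (sum f A) = (\<Sum>x\<in>A. poly_integral a b (f x))"
  by (induction A rule: finite_induct) (simp_all add: poly_integral_add)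

lemma poly_integral_square_pos:
  fixes p :: "real poly"
  assumes "a < b" "p \<noteq> 0"
  shows "poly_integral a b (p * p) > 0"
proof -
  have nonneg: "poly_integral a b (p * p) \<ge> 0"
    unfolding poly_integral_def by (rule integral_nonneg) simp_all
  have "poly_integral a b (p * p) \<noteq> 0"
  proof
    assume "poly_integral a b (p * p) = 0"
    moreover have "(poly (p * p) has_integral poly_integral a b (p * p)) {a..b}"
      unfolding poly_integral_def by (rule integrable_integral) simp
    ultimately have "(poly (p * p) has_integral 0) (cbox a b)"
      by simp
    then have "poly (p * p) x = 0" if "x \<in> {a..b}" for x
      using assms(1) that
      by (intro has_integral_0_cbox_imp_0[of a b "poly (p * p)"]) (auto intro: continuous_intros)
    then have "{a..b} \<subseteq> {x. poly p x = 0}"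
      by auto
    moreover have "infinite {a..b}"
      using assms(1) by simp
    ultimately show False
      using poly_roots_finite[OF assms(2)] finite_subset by blast
  qed
  with nonneg show ?thesis by linarith
qed

definition rescale :: "real \<Rightarrow> real \<Rightarrow> real poly" where
  "rescale a h = [:- a / h, 1 / h:]"

lemma poly_rescale: "poly (rescale a h) x = (x - a) / h"
  by (simp add: rescale_def diff_divide_distrib)

lemma degree_rescale: "h \<noteq> 0 \<Longrightarrow> degree (rescale a h) = 1"
  by (simp add: rescale_def)

lemma pderiv_rescale: "pderiv (rescale a h) = [:1 / h:]"
  by (simp add: rescale_def pderiv_pCons)

lemma poly_integral_pcompose_rescale:
  assumes "h > 0"
  shows "poly_integral a (a + h) (p \<circ>\<^sub>p rescale a h) = h * poly_integral 0 1 p"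
proof -
  obtain P where P: "pderiv P = p" "degree P \<le> Suc (degree p)"
    by (rule poly_antiderivative_exists)
  have "pderiv (smult h (P \<circ>\<^sub>p rescale a h)) = p \<circ>\<^sub>p rescale a h"
    using assms by (simp add: pderiv_smult pderiv_pcompose pderiv_rescale P)
  then have "poly_integral a (a + h) (p \<circ>\<^sub>p rescale a h) = h * (poly P 1 - poly P 0)"
    using poly_integral_pderiv[of a "a + h" "smult h (P \<circ>\<^sub>p rescale a h)"] assms
    by (simp add: poly_pcompose poly_rescale right_diff_distrib)
  also have "\<dots> = h * poly_integral 0 1 p"
    using poly_integral_pderiv[of 0 1 P] by (simp add: P)
  finally show ?thesis .
qed

section \<open>Integration by parts against an indefinite integral\<close>

lemma constant_if_increments_small:
  fixes \<Phi> :: "real \<Rightarrow> real"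
  assumes "a \<le> b"
    and small: "\<And>e. e > 0 \<Longrightarrow> \<exists>d>0. \<forall>x y. a \<le> x \<longrightarrow> x \<le> y \<longrightarrow> y \<le> b \<longrightarrow> y - x < d \<longrightarrow>
                  \<bar>\<Phi> y - \<Phi> x\<bar> \<le> e * (y - x)"
  shows "\<Phi> b = \<Phi> a"
proof -
  have "(\<Phi> has_field_derivative 0) (at x within {a..b})" if "x \<in> {a..b}" for x
    unfolding has_field_derivative_def has_derivative_within_alt
  proof (intro conjI bounded_linear_mult_right allI impI)
    fix e :: real
    assume "e > 0"
    then obtain d where "d > 0" and d: "\<And>x y. a \<le> x \<Longrightarrow> x \<le> y \<Longrightarrow> y \<le> b \<Longrightarrow> y - x < d \<Longrightarrow>
        \<bar>\<Phi> y - \<Phi> x\<bar> \<le> e * (y - x)"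
      using small by blast
    have "\<bar>\<Phi> y - \<Phi> x\<bar> \<le> e * \<bar>y - x\<bar>" if "y \<in> {a..b}" "\<bar>y - x\<bar> < d" for y
      using d[of x y] d[of y x] that \<open>x \<in> {a..b}\<close> by (cases "x \<le> y") (auto simp: abs_minus_commute)
    with \<open>d > 0\<close> show "\<exists>d>0. \<forall>y\<in>{a..b}. norm (y - x) < d \<longrightarrow>
        norm (\<Phi> y - \<Phi> x - 0 * (y - x)) \<le> e * norm (y - x)"
      by auto
  qed
  then obtain c where "\<forall>x\<in>{a..b}. \<Phi> x = c"
    using has_field_derivative_zero_constant[of "{a..b}" \<Phi>] by (auto simp: convex_real_interval)
  with assms(1) show ?thesis by simp
qed

lemma absolutely_integrable_mult_continuous:
  fixes g f :: "real \<Rightarrow> real"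
  assumes "g absolutely_integrable_on {a..b}" "continuous_on {a..b} f"
  shows "(\<lambda>s. g s * f s) absolutely_integrable_on {a..b}"
proof -
  have "(\<lambda>s. f s * g s) absolutely_integrable_on {a..b}"
  proof (rule absolutely_integrable_bounded_measurable_product_real)
    show "f \<in> borel_measurable (lebesgue_on {a..b})"
      using assms(2) by (rule continuous_imp_measurable_on_sets_lebesgue) simp
    show "bounded (f ` {a..b})"
      using assms(2) by (intro compact_imp_bounded compact_continuous_image) auto
  qed (use assms in auto)
  then show ?thesis by (simp add: mult.commute)
qed

lemma indefinite_integral_small_increments:
  fixes h :: "real \<Rightarrow> 'a::banach"
  assumes "h integrable_on {a..b}" "e > 0"
  shows "\<exists>d>0. \<forall>x u. a \<le> x \<longrightarrow> x \<le> u \<longrightarrow> u \<le> b \<longrightarrow> u - x < d \<longrightarrow> norm (integral {x..u} h) < e"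
proof -
  have "uniformly_continuous_on {a..b} (\<lambda>u. integral {a..u} h)"
    by (intro compact_uniformly_continuous indefinite_integral_continuous_1 assms(1)) simp
  then obtain d where "d > 0" and d: "\<And>x u. x \<in> {a..b} \<Longrightarrow> u \<in> {a..b} \<Longrightarrow> dist u x < d \<Longrightarrow>
      dist (integral {a..u} h) (integral {a..x} h) < e"
    using assms(2) unfolding uniformly_continuous_on_def by metis
  have "norm (integral {x..u} h) < e" if "a \<le> x" "x \<le> u" "u \<le> b" "u - x < d" for x u
  proof -
    have "integral {a..x} h + integral {x..u} h = integral {a..u} h"
      using that by (intro Henstock_Kurzweil_Integration.integral_combine
          integrable_on_subinterval[OF assms(1)]) auto
    then have "integral {x..u} h = integral {a..u} h - integral {a..x} h"
      by (metis add_diff_cancel_left')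
    then show ?thesis
      using d[of x u] that by (simp add: dist_norm)
  qed
  with \<open>d > 0\<close> show ?thesis
    by blast
qed

text \<open>Integration by parts on [x,y] of g F, with the indefinite integral of g as antiderivative,
  says exactly that this defect vanishes.\<close>
definition parts_defect ::
    "(real \<Rightarrow> real) \<Rightarrow> (real \<Rightarrow> real) \<Rightarrow> (real \<Rightarrow> real) \<Rightarrow> real \<Rightarrow> real \<Rightarrow> real" where
  "parts_defect g F f x y = integral {x..y} (\<lambda>s. g s * F s) - F y * integral {x..y} g
     + integral {x..y} (\<lambda>u. f u * integral {x..u} g)"

context
  fixes a b :: real and g F f :: "real \<Rightarrow> real"
  assumes g: "g absolutely_integrable_on {a..b}"
    and F: "\<And>x. x \<in> {a..b} \<Longrightarrow> (F has_real_derivative f x) (at x within {a..b})"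
    and f: "continuous_on {a..b} f"
begin

lemma has_integral_derivative:
  assumes "a \<le> x" "x \<le> y" "y \<le> b"
  shows "(f has_integral F y - F x) {x..y}"
proof (rule fundamental_theorem_of_calculus)
  fix u assume "u \<in> {x..y}"
  with assms have "(F has_real_derivative f u) (at u within {x..y})"
    by (intro DERIV_subset[OF F]) auto
  then show "(F has_vector_derivative f u) (at u within {x..y})"
    by (simp add: has_real_derivative_iff_has_vector_derivative)
qed (fact assms(2))

lemma integrable_on_subintervals:
  assumes "a \<le> x" "y \<le> b"
  shows "g integrable_on {x..y}" "(\<lambda>s. \<bar>g s\<bar>) integrable_on {x..y}"
    "(\<lambda>s. g s * F s) integrable_on {x..y}"
proof -
  have "(\<lambda>s. g s * F s) absolutely_integrable_on {a..b}"
    using g DERIV_continuous_on[OF F] by (rule absolutely_integrable_mult_continuous)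
  with g assms show "g integrable_on {x..y}" "(\<lambda>s. \<bar>g s\<bar>) integrable_on {x..y}"
    "(\<lambda>s. g s * F s) integrable_on {x..y}"
    by (auto intro: integrable_on_subinterval simp: absolutely_integrable_on_def)
qed

lemma parts_defect_additive:
  assumes "a \<le> x" "x \<le> y" "y \<le> b"
  shows "parts_defect g F f a y = parts_defect g F f a x + parts_defect g F f x y"
proof -
  let ?W = "\<lambda>c u. integral {c..u} g"
  have W_split: "?W a u = ?W a x + ?W x u" if "u \<in> {x..y}" for u
  proof -
    have "g integrable_on {a..u}"
      using that assms by (intro integrable_on_subintervals) auto
    with that assms show ?thesis
      by (simp add: Henstock_Kurzweil_Integration.integral_combine)
  qed
  have W_cont: "continuous_on {c..y} (?W c)" if "a \<le> c" for c
    using that assms by (intro indefinite_integral_continuous_1 integrable_on_subintervals) auto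
  have f_cont: "continuous_on {c..y} f" if "a \<le> c" for c
    using that assms by (intro continuous_on_subset[OF f]) auto
  have fW: "(\<lambda>u. f u * ?W a u) integrable_on {a..y}"
    by (intro integrable_continuous_interval continuous_on_mult f_cont W_cont) simp_all
  have Wx: "(\<lambda>u. f u * ?W x u) integrable_on {x..y}"
    using assms by (intro integrable_continuous_interval continuous_on_mult f_cont W_cont) simp_all
  have "integral {x..y} (\<lambda>u. f u * ?W a u) = integral {x..y} (\<lambda>u. ?W a x * f u + f u * ?W x u)"
    by (intro integral_cong) (simp only: W_split algebra_simps)
  also have "\<dots> = ?W a x * integral {x..y} f + integral {x..y} (\<lambda>u. f u * ?W x u)"
    using has_integral_integrable[OF has_integral_derivative[OF assms]] Wx
    by (simp add: integral_add integrable_on_mult_right)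
  also have "\<dots> = ?W a x * (F y - F x) + integral {x..y} (\<lambda>u. f u * ?W x u)"
    using has_integral_derivative[OF assms] by (simp add: integral_unique)
  finally have fW_split: "integral {x..y} (\<lambda>u. f u * ?W a u) =
      ?W a x * (F y - F x) + integral {x..y} (\<lambda>u. f u * ?W x u)" .
  have combine: "integral {a..y} h = integral {a..x} h + integral {x..y} h"
    if "h integrable_on {a..y}" for h :: "real \<Rightarrow> real"
    using assms that by (simp add: Henstock_Kurzweil_Integration.integral_combine)
  have "g integrable_on {a..y}" "(\<lambda>s. g s * F s) integrable_on {a..y}"
    using assms integrable_on_subintervals by auto
  then show ?thesis
    unfolding parts_defect_def combine[OF fW] fW_split
    using combine assms by (simp add: algebra_simps)
qed

lemma abs_diff_le_derivative_bound:
  assumes "a \<le> s" "s \<le> y" "y \<le> b" "\<And>u. u \<in> {s..y} \<Longrightarrow> \<bar>f u\<bar> \<le> L"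
  shows "\<bar>F y - F s\<bar> \<le> L * (y - s)"
proof -
  have "continuous_on {s..y} f"
    using assms(1-3) by (intro continuous_on_subset[OF f]) auto
  then have "norm (integral {s..y} f) \<le> L * (y - s)"
    using assms(2,4) by (intro integral_bound) auto
  then show ?thesis
    using assms(1-3) by (simp add: integral_unique[OF has_integral_derivative])
qed

lemma parts_defect_eq:
  assumes "a \<le> x" "y \<le> b"
  shows "parts_defect g F f x y =
    integral {x..y} (\<lambda>s. g s * (F s - F y)) + integral {x..y} (\<lambda>u. f u * integral {x..u} g)"
  using integrable_on_subintervals[OF assms]
  by (simp add: parts_defect_def right_diff_distrib integral_diff integrable_on_mult_left)

lemma parts_defect_bound:
  assumes "a \<le> x" "x \<le> y" "y \<le> b"
    and L: "\<And>u. u \<in> {x..y} \<Longrightarrow> \<bar>f u\<bar> \<le> L"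
    and \<eta>: "\<And>u. u \<in> {x..y} \<Longrightarrow> \<bar>integral {x..u} g\<bar> \<le> \<eta>"
  shows "\<bar>parts_defect g F f x y\<bar> \<le> (y - x) * L * (integral {x..y} (\<lambda>s. \<bar>g s\<bar>) + \<eta>)"
proof -
  have L0: "0 \<le> L"
    using L[of x] assms(2) by (meson abs_ge_zero atLeastAtMost_iff order_trans order_refl)
  have Lipschitz: "\<bar>F s - F y\<bar> \<le> L * (y - x)" if "s \<in> {x..y}" for s
  proof -
    have "\<bar>F y - F s\<bar> \<le> L * (y - s)"
      using that assms L by (intro abs_diff_le_derivative_bound) auto
    also have "\<dots> \<le> L * (y - x)"
      using that L0 by (intro mult_left_mono) auto
    finally show ?thesis
      by (simp add: abs_minus_commute)
  qed
  note gi = integrable_on_subintervals[OF assms(1,3)]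
  have "(\<lambda>s. g s * (F s - F y)) absolutely_integrable_on {x..y}"
  proof (rule absolutely_integrable_mult_continuous)
    show "g absolutely_integrable_on {x..y}"
      using assms by (intro absolutely_integrable_on_subinterval[OF g]) auto
    have "continuous_on {x..y} F"
      using assms by (intro continuous_on_subset[OF DERIV_continuous_on[OF F]]) auto
    then show "continuous_on {x..y} (\<lambda>s. F s - F y)"
      by (intro continuous_intros)
  qed
  then have "norm (integral {x..y} (\<lambda>s. g s * (F s - F y))) \<le>
      integral {x..y} (\<lambda>s. \<bar>g s\<bar> * (L * (y - x)))"
    using gi Lipschitz
    by (intro integral_norm_bound_integral integrable_on_mult_left)
       (auto simp: abs_mult absolutely_integrable_on_def intro: mult_left_mono)
  then have bound_F: "\<bar>integral {x..y} (\<lambda>s. g s * (F s - F y))\<bar> \<le>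
      integral {x..y} (\<lambda>s. \<bar>g s\<bar>) * (L * (y - x))"
    by (simp add: integral_mult_left)
  have "continuous_on {x..y} (\<lambda>u. f u * integral {x..u} g)"
    using assms indefinite_integral_continuous_1[OF gi(1)]
    by (intro continuous_intros continuous_on_subset[OF f]) auto
  then have "norm (integral {x..y} (\<lambda>u. f u * integral {x..u} g)) \<le> L * \<eta> * (y - x)"
    using assms(2) L \<eta> L0 by (intro integral_bound) (auto simp: abs_mult intro!: mult_mono)
  then have "\<bar>parts_defect g F f x y\<bar> \<le>
      integral {x..y} (\<lambda>s. \<bar>g s\<bar>) * (L * (y - x)) + L * \<eta> * (y - x)"
    using bound_F parts_defect_eq[OF assms(1,3)] by simp
  then show ?thesis
    by (simp add: algebra_simps)
qed

lemma parts_defect_small: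
  assumes "e > 0"
  shows "\<exists>d>0. \<forall>x y. a \<le> x \<longrightarrow> x \<le> y \<longrightarrow> y \<le> b \<longrightarrow> y - x < d \<longrightarrow>
    \<bar>parts_defect g F f x y\<bar> \<le> e * (y - x)"
proof -
  obtain L where L: "\<And>u. u \<in> {a..b} \<Longrightarrow> \<bar>f u\<bar> \<le> L"
    using compact_imp_bounded[OF compact_continuous_image[OF f compact_Icc]]
    unfolding bounded_iff by fastforce
  note integrable = integrable_on_subintervals[OF order_refl order_refl]
  define e' where "e' = e / (2 * max L 0 + 1)"
  have "e' > 0" "2 * L * e' \<le> e"
    using \<open>e > 0\<close> by (auto simp: e'_def field_simps max_def)
  obtain d1 where "d1 > 0" and d1: "\<And>x u. a \<le> x \<Longrightarrow> x \<le> u \<Longrightarrow> u \<le> b \<Longrightarrow> u - x < d1 \<Longrightarrow>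
      norm (integral {x..u} g) < e'"
    using indefinite_integral_small_increments[OF integrable(1) \<open>e' > 0\<close>] by auto
  obtain d2 where "d2 > 0" and d2: "\<And>x u. a \<le> x \<Longrightarrow> x \<le> u \<Longrightarrow> u \<le> b \<Longrightarrow> u - x < d2 \<Longrightarrow>
      norm (integral {x..u} (\<lambda>s. \<bar>g s\<bar>)) < e'"
    using indefinite_integral_small_increments[OF integrable(2) \<open>e' > 0\<close>] by auto
  have "\<bar>parts_defect g F f x y\<bar> \<le> e * (y - x)"
    if xy: "a \<le> x" "x \<le> y" "y \<le> b" "y - x < min d1 d2" for x y
  proof -
    have "\<bar>parts_defect g F f x y\<bar> \<le> (y - x) * L * (integral {x..y} (\<lambda>s. \<bar>g s\<bar>) + e')"
      using xy L d1[of x] by (intro parts_defect_bound) (auto intro: less_imp_le)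
    also have "\<dots> \<le> (y - x) * L * (e' + e')"
      using xy d2[of x y] L[of a] by (intro mult_left_mono add_right_mono) auto
    also have "\<dots> = (y - x) * (2 * L * e')"
      by (simp add: algebra_simps)
    also have "\<dots> \<le> (y - x) * e"
      using \<open>2 * L * e' \<le> e\<close> xy by (intro mult_left_mono) auto
    finally show ?thesis
      by (simp add: mult.commute)
  qed
  moreover have "min d1 d2 > 0"
    using \<open>d1 > 0\<close> \<open>d2 > 0\<close> by simp
  ultimately show ?thesis
    by blast
qed

lemma parts_defect_zero:
  assumes "a \<le> b"
  shows "parts_defect g F f a b = 0"
proof -
  have "parts_defect g F f a b = parts_defect g F f a a"
    using parts_defect_small parts_defect_additive
    by (intro constant_if_increments_small[OF assms]) (metis add_diff_cancel_left')
  then show ?thesis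
    by (simp add: parts_defect_def)
qed

theorem integration_by_parts_indefinite_integral:
  assumes "a \<le> b"
  shows "integral {a..b} (\<lambda>s. g s * F s) =
    F b * integral {a..b} g - integral {a..b} (\<lambda>u. f u * integral {a..u} g)"
  using parts_defect_zero[OF assms] by (simp add: parts_defect_def)

end

lemma integral_mult_poly_by_parts:
  fixes g w :: "real \<Rightarrow> real"
  assumes "a \<le> b" "g absolutely_integrable_on {a..b}"
    and w: "\<And>x. x \<in> {a..b} \<Longrightarrow> w x = w a + integral {a..x} g"
  shows "integral {a..b} (\<lambda>s. g s * poly r s) =
    poly r b * (w b - w a) - integral {a..b} (\<lambda>u. poly (pderiv r) u * (w u - w a))"
proof -
  have "integral {a..b} (\<lambda>s. g s * poly r s) =
      poly r b * integral {a..b} g - integral {a..b} (\<lambda>u. poly (pderiv r) u * integral {a..u} g)"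
    using assms(1,2)
    by (intro integration_by_parts_indefinite_integral has_field_derivative_at_within[OF poly_DERIV]
        continuous_intros)
  moreover have "integral {a..b} (\<lambda>u. poly (pderiv r) u * integral {a..u} g) =
      integral {a..b} (\<lambda>u. poly (pderiv r) u * (w u - w a))"
  proof (rule integral_cong)
    fix u
    assume "u \<in> {a..b}"
    then show "poly (pderiv r) u * integral {a..u} g = poly (pderiv r) u * (w u - w a)"
      using w[of u] by simp
  qed
  ultimately show ?thesis
    using w[of b] assms(1) by simp
qed

section \<open>Weak derivatives, the C0 norm and partitions\<close>

lemma weak_deriv_on_subinterval:
  assumes "weak_deriv_on T w g" "0 \<le> a" "a \<le> b" "b \<le> T"
  shows "g absolutely_integrable_on {a..b}"
    and "\<And>x. x \<in> {a..b} \<Longrightarrow> w x = w a + integral {a..x} g"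
proof -
  have g: "g absolutely_integrable_on {0..T}"
    and w: "\<And>x. x \<in> {0..T} \<Longrightarrow> w x = w 0 + integral {0..x} g"
    using assms(1) unfolding weak_deriv_on_def by blast+
  show "g absolutely_integrable_on {a..b}"
    using assms(2-4) by (auto intro: absolutely_integrable_on_subinterval[OF g])
  fix x
  assume "x \<in> {a..b}"
  have "g integrable_on {0..x}"
    using g \<open>x \<in> {a..b}\<close> assms(2-4)
    by (auto simp: absolutely_integrable_on_def intro: integrable_on_subinterval[of g "{0..T}"])
  then have "integral {0..x} g = integral {0..a} g + integral {a..x} g"
    using \<open>x \<in> {a..b}\<close> assms(2-4)
    by (simp add: Henstock_Kurzweil_Integration.integral_combine)
  moreover have "w x = w 0 + integral {0..x} g" "w a = w 0 + integral {0..a} g"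
    using \<open>x \<in> {a..b}\<close> assms(2-4) by (auto intro: w)
  ultimately show "w x = w a + integral {a..x} g"
    by linarith
qed

lemma continuous_on_indefinite_integral_repr:
  fixes g w :: "real \<Rightarrow> real"
  assumes "g integrable_on {a..b}" "\<And>x. x \<in> {a..b} \<Longrightarrow> w x = w a + integral {a..x} g"
  shows "continuous_on {a..b} w"
proof -
  have "continuous_on {a..b} (\<lambda>x. w a + integral {a..x} g)"
    using indefinite_integral_continuous_1[OF assms(1)] by (intro continuous_intros)
  then show ?thesis
    by (rule continuous_on_eq) (metis assms(2))
qed

lemma weak_deriv_on_continuous:
  assumes "weak_deriv_on T w g"
  shows "continuous_on {0..T} w"
proof (rule continuous_on_indefinite_integral_repr)
  show "g integrable_on {0..T}" "\<And>x. x \<in> {0..T} \<Longrightarrow> w x = w 0 + integral {0..x} g"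
    using assms unfolding weak_deriv_on_def absolutely_integrable_on_def by blast+
qed

lemma weak_deriv_mult_poly_integrable:
  assumes "weak_deriv_on T w g" "0 \<le> a" "a \<le> b" "b \<le> T"
  shows "(\<lambda>s. g s * poly r s) integrable_on {a..b}"
  using absolutely_integrable_mult_continuous[OF weak_deriv_on_subinterval(1)[OF assms]]
  by (auto simp: absolutely_integrable_on_def intro: continuous_intros)

lemma weak_deriv_integral_mult_poly_eq:
  assumes "weak_deriv_on T w g" "weak_deriv_on T w g'" "0 \<le> a" "a \<le> b" "b \<le> T"
  shows "integral {a..b} (\<lambda>s. g s * poly r s) = integral {a..b} (\<lambda>s. g' s * poly r s)"
  using integral_mult_poly_by_parts[OF _ weak_deriv_on_subinterval[OF assms(1,3-5)]]
    integral_mult_poly_by_parts[OF _ weak_deriv_on_subinterval[OF assms(2,3-5)]] assms(4)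
  by simp

lemma abs_le_C0norm:
  assumes "continuous_on {0..T} f" "s \<in> {0..T}"
  shows "\<bar>f s\<bar> \<le> C0norm T f"
proof -
  have "bounded ((\<lambda>s. \<bar>f s\<bar>) ` {0..T})"
    using assms(1) by (intro compact_imp_bounded compact_continuous_image continuous_intros) auto
  then show ?thesis
    unfolding C0norm_def by (intro cSUP_upper assms(2) bounded_imp_bdd_above)
qed

lemma C0norm_nonneg: "0 \<le> T \<Longrightarrow> continuous_on {0..T} f \<Longrightarrow> 0 \<le> C0norm T f"
  using abs_le_C0norm[of T f 0] by force

lemma C0norm_le:
  assumes "0 \<le> T" "\<And>s. s \<in> {0..T} \<Longrightarrow> \<bar>f s\<bar> \<le> M"
  shows "C0norm T f \<le> M"
  unfolding C0norm_def using assms by (intro cSUP_least) auto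

lemma partition_less:
  assumes "is_partition T N t" "i < j" "j \<le> N"
  shows "t i < t j"
proof (rule lift_Suc_mono_less_ivl[of "{..<N}"])
  show "\<And>n. n \<in> {..<N} \<Longrightarrow> t n < t (Suc n)"
    using assms(1) by (simp add: is_partition_def)
qed (use assms in auto)

lemma partition_le:
  assumes "is_partition T N t" "i \<le> j" "j \<le> N"
  shows "t i \<le> t j"
  using partition_less[OF assms(1), of i j] assms(2,3) by (cases "i = j") auto

lemma partition_piece_bounds:
  assumes "is_partition T N t" "n \<in> {1..N}"
  shows "0 \<le> t (n - 1)" "t (n - 1) < t n" "t n \<le> T"
  using partition_le[OF assms(1), of 0 "n - 1"] partition_less[OF assms(1), of "n - 1" n]
    partition_le[OF assms(1), of n N] assms
  by (auto simp: is_partition_def)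

definition partition_index :: "(nat \<Rightarrow> real) \<Rightarrow> real \<Rightarrow> nat" where
  "partition_index t s = (LEAST n. 1 \<le> n \<and> s \<le> t n)"

lemma partition_index_piece:
  assumes "is_partition T N t" "s \<in> {0..T}"
  shows "partition_index t s \<in> {1..N}"
    and "s \<in> {t (partition_index t s - 1)..t (partition_index t s)}"
proof -
  let ?m = "partition_index t s"
  have N: "1 \<le> N \<and> s \<le> t N"
    using assms by (auto simp: is_partition_def)
  then have m: "1 \<le> ?m \<and> s \<le> t ?m" "?m \<le> N"
    unfolding partition_index_def
    by (fact LeastI[of "\<lambda>n. 1 \<le> n \<and> s \<le> t n" N], fact Least_le[of _ N])
  then show "?m \<in> {1..N}"
    by simp
  have "t (?m - 1) \<le> s"
  proof (cases "?m = 1")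
    case True
    then show ?thesis
      using assms by (simp add: is_partition_def)
  next
    case False
    then have "\<not> (1 \<le> ?m - 1 \<and> s \<le> t (?m - 1))"
      using m(1) not_less_Least[of "?m - 1" "\<lambda>n. 1 \<le> n \<and> s \<le> t n"]
      unfolding partition_index_def by fastforce
    with False m(1) have "\<not> s \<le> t (?m - 1)"
      by auto
    then show ?thesis
      by simp
  qed
  with m show "s \<in> {t (?m - 1)..t ?m}"
    by simp
qed

lemma partition_index_glue:
  assumes "is_partition T N t" "n \<in> {1..N}" "s \<in> {t (n - 1)..t n}"
    and nodes: "\<And>m. m \<in> {1..N} \<Longrightarrow> f m (t (m - 1)) = c (t (m - 1)) \<and> f m (t m) = c (t m)"
  shows "f (partition_index t s) s = f n s"
proof -
  let ?m = "partition_index t s"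
  have "s \<in> {0..T}"
    using assms(3) partition_piece_bounds[OF assms(1,2)] by auto
  then have m: "?m \<in> {1..N}" "s \<in> {t (?m - 1)..t ?m}"
    using partition_index_piece[OF assms(1)] by auto
  consider "?m = n" | "?m < n" | "n < ?m"
    by linarith
  then show ?thesis
  proof cases
    case 2
    then have "t ?m \<le> t (n - 1)"
      using assms(2) by (intro partition_le[OF assms(1)]) auto
    then have "s = t ?m" "s = t (n - 1)"
      using m(2) assms(3) by auto
    then show ?thesis
      using nodes[OF m(1)] nodes[OF assms(2)] by metis
  next
    case 3
    then have "t n \<le> t (?m - 1)"
      using m(1) by (intro partition_le[OF assms(1)]) auto
    then have "s = t n" "s = t (?m - 1)"
      using m(2) assms(3) by auto
    then show ?thesis
      using nodes[OF m(1)] nodes[OF assms(2)] by metis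
  qed simp
qed

lemma partition_pieces_Union:
  assumes "is_partition T N t"
  shows "(\<Union>n\<in>{1..N}. {t (n - 1)..t n}) = {0..T}"
proof (intro equalityI UN_least subsetI)
  fix n s
  assume "n \<in> {1..N}" "s \<in> {t (n - 1)..t n}"
  then show "s \<in> {0..T}"
    using partition_piece_bounds[OF assms \<open>n \<in> {1..N}\<close>] by auto
next
  fix s
  assume "s \<in> {0..T}"
  then show "s \<in> (\<Union>n\<in>{1..N}. {t (n - 1)..t n})"
    using partition_index_piece[OF assms] by blast
qed

section \<open>Local L2 projections onto polynomials\<close>

lemma integral_mult_poly_sum:
  fixes g :: "real \<Rightarrow> real"
  assumes "finite A" "\<And>r. (\<lambda>s. g s * poly r s) integrable_on S"
  shows "integral S (\<lambda>s. g s * poly (\<Sum>k\<in>A. smult (d k) (P k)) s) =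
    (\<Sum>k\<in>A. d k * integral S (\<lambda>s. g s * poly (P k) s))"
proof -
  have "integral S (\<lambda>s. g s * poly (\<Sum>k\<in>A. smult (d k) (P k)) s) =
      integral S (\<lambda>s. \<Sum>k\<in>A. d k * (g s * poly (P k) s))"
    by (simp add: poly_sum sum_distrib_left mult.left_commute)
  also have "\<dots> = (\<Sum>k\<in>A. integral S (\<lambda>s. d k * (g s * poly (P k) s)))"
    using assms by (intro integral_sum integrable_on_mult_right) auto
  finally show ?thesis
    by simp
qed

definition is_L2_proj :: "nat \<Rightarrow> real \<Rightarrow> real \<Rightarrow> (real \<Rightarrow> real) \<Rightarrow> real poly \<Rightarrow> bool" where
  "is_L2_proj q a b g Q \<longleftrightarrow> degree Q < q \<and>
     (\<forall>r. degree r < q \<longrightarrow> poly_integral a b (Q * r) = integral {a..b} (\<lambda>s. g s * poly r s))"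

lemma is_L2_proj_unique:
  assumes "a < b" "is_L2_proj q a b g Q1" "is_L2_proj q a b g Q2"
  shows "Q1 = Q2"
proof -
  have "degree (Q1 - Q2) < q"
    using assms(2,3) by (auto simp: is_L2_proj_def intro: degree_diff_less)
  then have "poly_integral a b (Q1 * (Q1 - Q2)) = poly_integral a b (Q2 * (Q1 - Q2))"
    using assms(2,3) by (simp add: is_L2_proj_def)
  then have "poly_integral a b ((Q1 - Q2) * (Q1 - Q2)) = 0"
    by (simp add: left_diff_distrib poly_integral_diff del: mult_diff_mult)
  then show ?thesis
    using poly_integral_square_pos[OF assms(1), of "Q1 - Q2"] by fastforce
qed

lemma is_L2_proj_integral:
  assumes "1 \<le> q" "is_L2_proj q a b g Q"
  shows "poly_integral a b Q = integral {a..b} g"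
  using assms by (auto simp: is_L2_proj_def dest: spec[of _ 1])

lemma poly_eq_sum_degree_basis:
  fixes P :: "nat \<Rightarrow> 'a::field poly"
  assumes "\<And>k. k < m \<Longrightarrow> degree (P k) = k \<and> P k \<noteq> 0"
    and "\<And>i. m \<le> i \<Longrightarrow> coeff r i = 0"
  shows "\<exists>c. r = (\<Sum>k<m. smult (c k) (P k))"
  using assms
proof (induction m arbitrary: r)
  case 0
  then have "r = 0"
    by (intro poly_eqI) simp
  then show ?case
    by simp
next
  case (Suc m)
  have "degree (P m) = m" "P m \<noteq> 0"
    using Suc.prems(1)[of m] by auto
  then have lead: "coeff (P m) m \<noteq> 0"
    by (metis leading_coeff_0_iff)
  define d where "d = coeff r m / coeff (P m) m"
  have "coeff (r - smult d (P m)) i = 0" if "m \<le> i" for i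
    using that lead Suc.prems(2)[of i] \<open>degree (P m) = m\<close>
    by (cases "i = m") (auto simp: d_def coeff_eq_0)
  then obtain c where "r - smult d (P m) = (\<Sum>k<m. smult (c k) (P k))"
    using Suc.IH Suc.prems(1) by force
  then have "r = (\<Sum>k<Suc m. smult ((c(m := d)) k) (P k))"
    by (simp add: algebra_simps)
  then show ?case
    by blast
qed

locale orthogonal_poly_basis =
  fixes q :: nat and B :: "nat \<Rightarrow> real poly"
  assumes degree_basis: "k < q \<Longrightarrow> degree (B k) = k"
    and basis_nonzero: "k < q \<Longrightarrow> B k \<noteq> 0"
    and basis_orthogonal: "j < q \<Longrightarrow> k < q \<Longrightarrow> j \<noteq> k \<Longrightarrow> poly_integral 0 1 (B j * B k) = 0"
begin

definition basis_norm :: "nat \<Rightarrow> real" where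
  "basis_norm k = poly_integral 0 1 (B k * B k)"

lemma basis_norm_pos: "k < q \<Longrightarrow> basis_norm k > 0"
  unfolding basis_norm_def by (intro poly_integral_square_pos basis_nonzero) simp_all

definition basis_on :: "real \<Rightarrow> real \<Rightarrow> nat \<Rightarrow> real poly" where
  "basis_on a h k = B k \<circ>\<^sub>p rescale a h"

lemma degree_basis_on: "h > 0 \<Longrightarrow> k < q \<Longrightarrow> degree (basis_on a h k) = k"
  by (simp add: basis_on_def degree_pcompose degree_rescale degree_basis)

lemma basis_on_orthogonal:
  assumes "h > 0" "j < q" "k < q"
  shows "poly_integral a (a + h) (basis_on a h j * basis_on a h k) =
    (if j = k then h * basis_norm k else 0)"
  using poly_integral_pcompose_rescale[OF assms(1), of a "B j * B k"]
    basis_orthogonal[OF assms(2,3)]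
  by (simp add: basis_on_def pcompose_mult basis_norm_def)

lemma poly_integral_sum_basis_on:
  assumes "h > 0" "j < q"
  shows "poly_integral a (a + h) ((\<Sum>k<q. smult (c k) (basis_on a h k)) * basis_on a h j) =
    c j * (h * basis_norm j)"
proof -
  have "poly_integral a (a + h) ((\<Sum>k<q. smult (c k) (basis_on a h k)) * basis_on a h j) =
      (\<Sum>k<q. c k * poly_integral a (a + h) (basis_on a h k * basis_on a h j))"
    by (simp add: sum_distrib_right poly_integral_sum poly_integral_smult)
  also have "\<dots> = (\<Sum>k<q. if k = j then c j * (h * basis_norm j) else 0)"
    by (intro sum.cong) (auto simp: basis_on_orthogonal assms)
  finally show ?thesis
    using assms(2) by simp
qed

lemma basis_on_expansion:
  assumes "h > 0" "degree r < q"
  shows "r = (\<Sum>k<q. smult (poly_integral a (a + h) (r * basis_on a h k) / (h * basis_norm k))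
                         (basis_on a h k))"
proof -
  have "basis_on a h k \<noteq> 0" if "k < q" for k
    using assms(1) basis_nonzero[OF that] pcompose_eq_0[of "B k" "rescale a h"]
    by (auto simp: basis_on_def degree_rescale)
  then obtain c where c: "r = (\<Sum>k<q. smult (c k) (basis_on a h k))"
    using poly_eq_sum_degree_basis[of q "basis_on a h" r] degree_basis_on[OF assms(1)] assms(2)
    by (force intro: coeff_eq_0)
  have "poly_integral a (a + h) (r * basis_on a h j) / (h * basis_norm j) = c j" if "j < q" for j
    using poly_integral_sum_basis_on[OF assms(1) that, where c = c] basis_norm_pos[OF that] assms(1)
    by (subst c) simp
  then show ?thesis
    by (subst (1) c) (intro sum.cong; simp)
qed

lemma basis_on_bounds:
  assumes "h > 0" "u \<in> {a..a + h}"
  shows "\<bar>poly (basis_on a h k) u\<bar> \<le> C0norm 1 (poly (B k))"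
    and "\<bar>poly (pderiv (basis_on a h k)) u\<bar> \<le> C0norm 1 (poly (pderiv (B k))) / h"
proof -
  have x: "(u - a) / h \<in> {0..1}"
    using assms by auto
  show "\<bar>poly (basis_on a h k) u\<bar> \<le> C0norm 1 (poly (B k))"
    using abs_le_C0norm[OF _ x, of "poly (B k)"]
    by (simp add: basis_on_def poly_pcompose poly_rescale continuous_intros)
  have "poly (pderiv (basis_on a h k)) u = poly (pderiv (B k)) ((u - a) / h) / h"
    by (simp add: basis_on_def pderiv_pcompose pderiv_rescale poly_pcompose poly_rescale)
  then show "\<bar>poly (pderiv (basis_on a h k)) u\<bar> \<le> C0norm 1 (poly (pderiv (B k))) / h"
    using abs_le_C0norm[OF _ x, of "poly (pderiv (B k))"] assms(1)
    by (simp add: divide_right_mono continuous_intros)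
qed

lemma poly_integral_basis_on_bound:
  assumes "h > 0" "s \<in> {a..a + h}"
  shows "\<bar>poly_integral a s (basis_on a h k)\<bar> \<le> C0norm 1 (poly (B k)) * h"
proof -
  have "norm (poly_integral a s (basis_on a h k)) \<le> C0norm 1 (poly (B k)) * (s - a)"
    unfolding poly_integral_def using assms basis_on_bounds(1)[OF assms(1)]
    by (intro integral_bound continuous_intros) auto
  also have "\<dots> \<le> C0norm 1 (poly (B k)) * h"
    using assms(2) by (intro mult_left_mono C0norm_nonneg continuous_intros) auto
  finally show ?thesis
    by simp
qed

lemma is_L2_proj_basis_on:
  assumes "1 \<le> q" "h > 0" and g: "\<And>r. (\<lambda>s. g s * poly r s) integrable_on {a..a + h}"
  shows "is_L2_proj q a (a + h) g
    (\<Sum>k<q. smult (integral {a..a + h} (\<lambda>s. g s * poly (basis_on a h k) s) / (h * basis_norm k))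
              (basis_on a h k))"
    (is "is_L2_proj q a (a + h) g ?Q")
proof -
  let ?J = "\<lambda>r. integral {a..a + h} (\<lambda>s. g s * poly r s)"
  have "degree ?Q \<le> q - 1"
    using degree_basis_on[OF assms(2)]
    by (intro degree_sum_le order_trans[OF degree_smult_le]) auto
  moreover have "poly_integral a (a + h) (?Q * r) = ?J r" if "degree r < q" for r
  proof -
    define d where "d k = poly_integral a (a + h) (r * basis_on a h k) / (h * basis_norm k)" for k
    have r: "r = (\<Sum>k<q. smult (d k) (basis_on a h k))"
      unfolding d_def using basis_on_expansion[OF assms(2) that] .
    have "poly_integral a (a + h) (?Q * r) =
        (\<Sum>k<q. d k * poly_integral a (a + h) (?Q * basis_on a h k))"
      by (subst r)
        (simp add: sum_distrib_left poly_integral_sum poly_integral_smult mult.left_commute)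
    also have "\<dots> = (\<Sum>k<q. d k * ?J (basis_on a h k))"
    proof (intro sum.cong refl)
      fix k
      assume "k \<in> {..<q}"
      then show "d k * poly_integral a (a + h) (?Q * basis_on a h k) = d k * ?J (basis_on a h k)"
        using poly_integral_sum_basis_on[OF assms(2)] basis_norm_pos[of k] assms(2) by simp
    qed
    also have "\<dots> = ?J r"
      by (subst r) (simp add: integral_mult_poly_sum g)
    finally show ?thesis .
  qed
  ultimately show ?thesis
    using assms(1) by (simp add: is_L2_proj_def)
qed

definition stability_const :: real where
  "stability_const = (\<Sum>k<q. (C0norm 1 (poly (B k)) + C0norm 1 (poly (pderiv (B k)))) *
                              C0norm 1 (poly (B k)) / basis_norm k)"

lemma stability_const_nonneg: "stability_const \<ge> 0"
  unfolding stability_const_def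
proof (rule sum_nonneg)
  fix k
  assume "k \<in> {..<q}"
  moreover have "0 \<le> C0norm 1 (poly (B k))" "0 \<le> C0norm 1 (poly (pderiv (B k)))"
    by (intro C0norm_nonneg continuous_intros; simp)+
  ultimately show "0 \<le> (C0norm 1 (poly (B k)) + C0norm 1 (poly (pderiv (B k)))) *
      C0norm 1 (poly (B k)) / basis_norm k"
    using basis_norm_pos[of k] by simp
qed

lemma integral_mult_basis_on_bound:
  assumes "h > 0" "g absolutely_integrable_on {a..a + h}"
    and w: "\<And>x. x \<in> {a..a + h} \<Longrightarrow> w x = w a + integral {a..x} g"
    and M: "\<And>u. u \<in> {a..a + h} \<Longrightarrow> \<bar>w u - w a\<bar> \<le> M"
  shows "\<bar>integral {a..a + h} (\<lambda>s. g s * poly (basis_on a h k) s)\<bar> \<le>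
    M * (C0norm 1 (poly (B k)) + C0norm 1 (poly (pderiv (B k))))"
proof -
  let ?R = "basis_on a h k"
    and ?S = "C0norm 1 (poly (B k))" and ?D = "C0norm 1 (poly (pderiv (B k)))"
  have M0: "0 \<le> M"
    using M[of a] assms(1) by force
  have S0: "0 \<le> ?S" and D0: "0 \<le> ?D"
    by (intro C0norm_nonneg continuous_intros; simp)+
  have "\<bar>poly ?R (a + h)\<bar> \<le> ?S" "\<bar>w (a + h) - w a\<bar> \<le> M"
    using assms(1) by (intro basis_on_bounds(1) M; simp)+
  then have boundary: "\<bar>poly ?R (a + h) * (w (a + h) - w a)\<bar> \<le> ?S * M"
    unfolding abs_mult using S0 by (intro mult_mono) auto
  have "continuous_on {a..a + h} w"
    using assms(2) by (intro continuous_on_indefinite_integral_repr[OF _ w])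
      (auto simp: absolutely_integrable_on_def)
  then have "continuous_on {a..a + h} (\<lambda>u. poly (pderiv ?R) u * (w u - w a))"
    by (intro continuous_intros)
  moreover have "\<bar>poly (pderiv ?R) u * (w u - w a)\<bar> \<le> ?D / h * M" if "u \<in> {a..a + h}" for u
    unfolding abs_mult using that assms(1) M0 D0 basis_on_bounds(2)[OF assms(1) that] M[OF that]
    by (intro mult_mono) auto
  ultimately have "norm (integral {a..a + h} (\<lambda>u. poly (pderiv ?R) u * (w u - w a))) \<le>
      ?D / h * M * (a + h - a)"
    using assms(1) by (intro integral_bound) auto
  then have interior: "\<bar>integral {a..a + h} (\<lambda>u. poly (pderiv ?R) u * (w u - w a))\<bar> \<le> ?D * M"
    using assms(1) by simp
  have "integral {a..a + h} (\<lambda>s. g s * poly ?R s) =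
      poly ?R (a + h) * (w (a + h) - w a) -
      integral {a..a + h} (\<lambda>u. poly (pderiv ?R) u * (w u - w a))"
    using assms(1) by (intro integral_mult_poly_by_parts assms(2) w) auto
  with boundary interior show ?thesis
    by (simp add: algebra_simps)
qed

lemma L2_proj_antiderivative_bound:
  assumes "a < b" "is_L2_proj q a b g Q" "g absolutely_integrable_on {a..b}"
    and w: "\<And>x. x \<in> {a..b} \<Longrightarrow> w x = w a + integral {a..x} g"
    and M: "\<And>u. u \<in> {a..b} \<Longrightarrow> \<bar>w u - w a\<bar> \<le> M"
    and s: "s \<in> {a..b}"
  shows "\<bar>poly_integral a s Q\<bar> \<le> stability_const * M"
proof -
  define h where "h = b - a"
  have h: "h > 0" and b: "b = a + h"
    using assms(1) by (auto simp: h_def)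
  let ?R = "basis_on a h" and ?S = "\<lambda>k. C0norm 1 (poly (B k))"
    and ?D = "\<lambda>k. C0norm 1 (poly (pderiv (B k)))"
  define c where "c k = poly_integral a b (Q * ?R k) / (h * basis_norm k)" for k
  have Q: "Q = (\<Sum>k<q. smult (c k) (?R k))"
    unfolding c_def b using basis_on_expansion[OF h] assms(2) by (simp add: is_L2_proj_def)
  have term_bound: "\<bar>c k * poly_integral a s (?R k)\<bar> \<le> M * ((?S k + ?D k) * ?S k / basis_norm k)"
    if "k < q" for k
  proof -
    have "poly_integral a b (Q * ?R k) = integral {a..b} (\<lambda>s. g s * poly (?R k) s)"
      using assms(2) degree_basis_on[OF h that] that by (simp add: is_L2_proj_def)
    then have "\<bar>c k\<bar> \<le> M * (?S k + ?D k) / (h * basis_norm k)"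
      unfolding c_def b
      using integral_mult_basis_on_bound[OF h assms(3)[unfolded b] w[unfolded b] M[unfolded b],
          of k]
        h basis_norm_pos[OF that]
      by (simp add: abs_div divide_right_mono)
    moreover have "\<bar>poly_integral a s (?R k)\<bar> \<le> ?S k * h"
      using s b by (intro poly_integral_basis_on_bound h) simp
    ultimately have "\<bar>c k * poly_integral a s (?R k)\<bar> \<le>
        M * (?S k + ?D k) / (h * basis_norm k) * (?S k * h)"
      unfolding abs_mult by (intro mult_mono) auto
    also have "\<dots> = M * ((?S k + ?D k) * ?S k / basis_norm k)"
      using h basis_norm_pos[OF that] by (simp add: field_simps)
    finally show ?thesis .
  qed
  have "\<bar>poly_integral a s Q\<bar> = \<bar>\<Sum>k<q. c k * poly_integral a s (?R k)\<bar>"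
    by (subst Q) (simp add: poly_integral_sum poly_integral_smult)
  also have "\<dots> \<le> (\<Sum>k<q. M * ((?S k + ?D k) * ?S k / basis_norm k))"
    using term_bound by (intro order_trans[OF sum_abs sum_mono]) auto
  also have "\<dots> = stability_const * M"
    by (simp add: stability_const_def sum_distrib_left mult.commute)
  finally show ?thesis .
qed

end

lemma orthogonal_poly_basis_exists: "\<exists>B. orthogonal_poly_basis q B"
proof (induction q)
  case 0
  show ?case
    by (simp add: orthogonal_poly_basis_def)
next
  case (Suc n)
  then obtain B where "orthogonal_poly_basis n B" ..
  then interpret orthogonal_poly_basis n B .
  define c where "c k = poly_integral 0 1 (monom 1 n * B k) / basis_norm k" for k
  define Bn where "Bn = monom 1 n - (\<Sum>k<n. smult (c k) (B k))"
  have "coeff (\<Sum>k<n. smult (c k) (B k)) i = 0" if "n \<le> i" for i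
    unfolding coeff_sum using that degree_basis by (intro sum.neutral ballI) (simp add: coeff_eq_0)
  then have coeff_Bn: "coeff Bn n = 1" "\<And>i. n < i \<Longrightarrow> coeff Bn i = 0"
    by (simp_all add: Bn_def coeff_monom)
  then have "degree Bn = n" "Bn \<noteq> 0"
    by (auto simp: le_antisym degree_le le_degree)
  moreover have "poly_integral 0 1 (Bn * B j) = 0" if "j < n" for j
  proof -
    have "poly_integral 0 1 ((\<Sum>k<n. smult (c k) (B k)) * B j) =
        (\<Sum>k<n. c k * poly_integral 0 1 (B k * B j))"
      by (simp add: sum_distrib_right poly_integral_sum poly_integral_smult)
    also have "\<dots> = (\<Sum>k<n. if k = j then c j * basis_norm j else 0)"
      using that basis_orthogonal by (intro sum.cong) (auto simp: basis_norm_def)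
    also have "\<dots> = c j * basis_norm j"
      using that by simp
    also have "\<dots> = poly_integral 0 1 (monom 1 n * B j)"
      using basis_norm_pos[OF that] by (simp add: c_def)
    finally show ?thesis
      by (simp add: Bn_def left_diff_distrib poly_integral_diff)
  qed
  ultimately have "orthogonal_poly_basis (Suc n) (B(n := Bn))"
    using degree_basis basis_nonzero basis_orthogonal
    by unfold_locales (auto simp: less_Suc_eq mult.commute)
  then show ?case
    by blast
qed

lemma L2_proj_exists:
  assumes "1 \<le> q" "a < b" "\<And>r. (\<lambda>s. g s * poly r s) integrable_on {a..b}"
  shows "\<exists>Q. is_L2_proj q a b g Q"
proof -
  obtain B where "orthogonal_poly_basis q B"
    using orthogonal_poly_basis_exists by blast
  then interpret orthogonal_poly_basis q B .
  show ?thesis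
    using is_L2_proj_basis_on[OF assms(1), where h = "b - a" and g = g and a = a] assms(2,3) by auto
qed

lemma L2_proj_interpolant_exists:
  assumes "1 \<le> q" "weak_deriv_on T w g" "0 \<le> a" "a < b" "b \<le> T"
  obtains P where "degree P \<le> q" "poly P a = w a" "poly P b = w b" "is_L2_proj q a b g (pderiv P)"
proof -
  obtain Q where Q: "is_L2_proj q a b g Q"
    using assms by (metis L2_proj_exists weak_deriv_mult_poly_integrable less_imp_le)
  obtain P0 where P0: "pderiv P0 = Q" "degree P0 \<le> Suc (degree Q)"
    by (rule poly_antiderivative_exists)
  define P where "P = P0 + [:w a - poly P0 a:]"
  have "degree P \<le> q"
    unfolding P_def using P0(2) Q by (intro degree_add_le) (auto simp: is_L2_proj_def)
  moreover have "pderiv P = Q" "poly P a = w a"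
    by (simp_all add: P_def pderiv_add P0(1))
  moreover have "poly P b - poly P a = integral {a..b} g"
    using is_L2_proj_integral[OF assms(1) Q] poly_integral_pderiv[of a b P] assms(4)
      \<open>pderiv P = Q\<close> by simp
  moreover have "w b = w a + integral {a..b} g"
    using weak_deriv_on_subinterval(2)[OF assms(2,3) less_imp_le[OF assms(4)] assms(5), of b]
      assms(4)
    by simp
  ultimately show ?thesis
    using that Q by simp
qed

section \<open>The projection onto continuous piecewise polynomials\<close>

lemma integral_deriv_poly_piece_mult:
  fixes v g :: "real \<Rightarrow> real"
  assumes "a < b" "\<And>s. s \<in> {a..b} \<Longrightarrow> v s = poly p s"
    and "(\<lambda>s. g s * poly r s) integrable_on {a..b}"
  shows "integral {a..b} (\<lambda>s. (deriv v s - g s) * poly r s) =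
    poly_integral a b (pderiv p * r) - integral {a..b} (\<lambda>s. g s * poly r s)"
proof -
  have "integral {a..b} (\<lambda>s. (deriv v s - g s) * poly r s) =
      integral {a..b} (\<lambda>s. poly (pderiv p * r) s - g s * poly r s)"
  proof (rule integral_spike[of "{a, b}"])
    fix s
    assume "s \<in> {a..b} - {a, b}"
    then have "s \<in> {a<..<b}"
      by auto
    then have "(v has_field_derivative poly (pderiv p) s) (at s)"
      by (rule has_field_derivative_transform_within_open[OF poly_DERIV open_greaterThanLessThan])
        (simp add: assms(2))
    then show "poly (pderiv p * r) s - g s * poly r s = (deriv v s - g s) * poly r s"
      by (simp add: DERIV_imp_deriv algebra_simps)
  qed simp
  also have "\<dots> = poly_integral a b (pderiv p * r) - integral {a..b} (\<lambda>s. g s * poly r s)"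
    unfolding poly_integral_def by (rule integral_diff[OF integrable_on_poly assms(3)])
  finally show ?thesis .
qed

context
  fixes q N :: nat and T :: real and t :: "nat \<Rightarrow> real" and w :: "real \<Rightarrow> real"
  assumes q: "1 \<le> q" and partition: "is_partition T N t"
begin

lemma is_Ptau_piece:
  assumes "is_Ptau q T N t w v" "weak_deriv_on T w g" "n \<in> {1..N}"
  obtains p where "degree p \<le> q" "\<And>s. s \<in> {t (n - 1)..t n} \<Longrightarrow> v s = poly p s"
    "is_L2_proj q (t (n - 1)) (t n) g (pderiv p)"
proof -
  note bounds = partition_piece_bounds[OF partition assms(3)]
  obtain p where p: "degree p \<le> q" "\<And>s. s \<in> {t (n - 1)..t n} \<Longrightarrow> v s = poly p s"
    using assms(1,3) unfolding is_Ptau_def Vtau_def by blast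
  have "poly_integral (t (n - 1)) (t n) (pderiv p * r) =
      integral {t (n - 1)..t n} (\<lambda>s. g s * poly r s)" if "degree r < q" for r
  proof -
    have "integral {t (n - 1)..t n} (\<lambda>s. (deriv v s - g s) * poly r s) = 0"
      using assms that unfolding is_Ptau_def by auto
    moreover have "(\<lambda>s. g s * poly r s) integrable_on {t (n - 1)..t n}"
      using bounds by (intro weak_deriv_mult_poly_integrable[OF assms(2)]) auto
    ultimately show ?thesis
      using integral_deriv_poly_piece_mult[OF bounds(2) p(2)] by simp
  qed
  moreover have "degree (pderiv p) < q"
    using p(1) q by (simp add: degree_pderiv)
  ultimately show ?thesis
    using that p by (simp add: is_L2_proj_def)
qed

lemma is_Ptau_nodes:
  assumes "is_Ptau q T N t w v" "weak_deriv_on T w g" "n \<le> N"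
  shows "v (t n) = w (t n)"
  using assms(3)
proof (induction n)
  case 0
  then show ?case
    using assms(1) partition by (simp add: is_Ptau_def is_partition_def)
next
  case (Suc n)
  then have n: "Suc n \<in> {1..N}"
    by simp
  note bounds = partition_piece_bounds[OF partition n]
  obtain p where p: "\<And>s. s \<in> {t n..t (Suc n)} \<Longrightarrow> v s = poly p s"
    and proj: "is_L2_proj q (t n) (t (Suc n)) g (pderiv p)"
    using is_Ptau_piece[OF assms(1,2) n] by auto
  have "poly p (t (Suc n)) - poly p (t n) = integral {t n..t (Suc n)} g"
    using is_L2_proj_integral[OF q proj] poly_integral_pderiv[of "t n" "t (Suc n)" p] bounds by simp
  moreover have "w (t (Suc n)) = w (t n) + integral {t n..t (Suc n)} g"
    using weak_deriv_on_subinterval(2)[OF assms(2), of "t n" "t (Suc n)" "t (Suc n)"] bounds by simp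
  ultimately show ?case
    using Suc p[of "t n"] p[of "t (Suc n)"] bounds by simp
qed

lemma is_Ptau_on_piece:
  assumes "is_Ptau q T N t w v" "weak_deriv_on T w g" "n \<in> {1..N}"
    and p: "\<And>s. s \<in> {t (n - 1)..t n} \<Longrightarrow> v s = poly p s" and s: "s \<in> {t (n - 1)..t n}"
  shows "v s = w (t (n - 1)) + poly_integral (t (n - 1)) s (pderiv p)"
proof -
  have "v (t (n - 1)) = w (t (n - 1))"
    using assms(3) by (intro is_Ptau_nodes[OF assms(1,2)]) auto
  then show ?thesis
    using p[OF s] p[of "t (n - 1)"] s poly_integral_pderiv[of "t (n - 1)" s p] by auto
qed

lemma is_Ptau_unique:
  assumes "is_Ptau q T N t w v1" "is_Ptau q T N t w v2" "weak_deriv_on T w g"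
  shows "v1 = v2"
proof
  fix s
  show "v1 s = v2 s"
  proof (cases "s \<in> {0..T}")
    case False
    then show ?thesis
      using assms(1,2) by (simp add: is_Ptau_def)
  next
    case True
    let ?n = "partition_index t s"
    note n = partition_index_piece[OF partition True]
    obtain p1 where p1: "\<And>s. s \<in> {t (?n - 1)..t ?n} \<Longrightarrow> v1 s = poly p1 s"
      and proj1: "is_L2_proj q (t (?n - 1)) (t ?n) g (pderiv p1)"
      using is_Ptau_piece[OF assms(1,3) n(1)] by auto
    obtain p2 where p2: "\<And>s. s \<in> {t (?n - 1)..t ?n} \<Longrightarrow> v2 s = poly p2 s"
      and proj2: "is_L2_proj q (t (?n - 1)) (t ?n) g (pderiv p2)"
      using is_Ptau_piece[OF assms(2,3) n(1)] by auto
    have "pderiv p1 = pderiv p2"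
      using partition_piece_bounds[OF partition n(1)] proj1 proj2 by (intro is_L2_proj_unique) auto
    then show ?thesis
      using is_Ptau_on_piece[OF assms(1,3) n(1) p1 n(2)]
        is_Ptau_on_piece[OF assms(2,3) n(1) p2 n(2)]
      by simp
  qed
qed

lemma is_PtauI:
  assumes "weak_deriv_on T w g" "continuous_on {0..T} v" "\<And>s. s \<notin> {0..T} \<Longrightarrow> v s = 0"
    "v 0 = w 0"
    and pieces: "\<And>n. n \<in> {1..N} \<Longrightarrow> \<exists>P. degree P \<le> q \<and>
      (\<forall>s\<in>{t (n - 1)..t n}. v s = poly P s) \<and> is_L2_proj q (t (n - 1)) (t n) g (pderiv P)"
  shows "is_Ptau q T N t w v"
proof -
  have "integral {t (n - 1)..t n} (\<lambda>s. (deriv v s - g' s) * poly r s) = 0"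
    if g': "weak_deriv_on T w g'" and n: "n \<in> {1..N}" and r: "degree r < q" for g' n r
  proof -
    note bounds = partition_piece_bounds[OF partition n]
    obtain P where P: "\<And>s. s \<in> {t (n - 1)..t n} \<Longrightarrow> v s = poly P s"
      and proj: "is_L2_proj q (t (n - 1)) (t n) g (pderiv P)"
      using pieces[OF n] by blast
    have "integral {t (n - 1)..t n} (\<lambda>s. (deriv v s - g' s) * poly r s) =
        poly_integral (t (n - 1)) (t n) (pderiv P * r) -
        integral {t (n - 1)..t n} (\<lambda>s. g' s * poly r s)"
      using bounds
      by (intro integral_deriv_poly_piece_mult P weak_deriv_mult_poly_integrable[OF g']) auto
    also have "poly_integral (t (n - 1)) (t n) (pderiv P * r) =
        integral {t (n - 1)..t n} (\<lambda>s. g' s * poly r s)"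
      using proj r weak_deriv_integral_mult_poly_eq[OF assms(1) g'] bounds
      by (simp add: is_L2_proj_def)
    finally show ?thesis
      by simp
  qed
  moreover have "v \<in> Vtau q T N t"
    using assms(2) pieces unfolding Vtau_def by blast
  ultimately show ?thesis
    using assms(3,4) q unfolding is_Ptau_def by auto
qed

lemma is_Ptau_exists:
  assumes "weak_deriv_on T w g"
  shows "\<exists>v. is_Ptau q T N t w v"
proof -
  have "\<exists>P. degree P \<le> q \<and> poly P (t (n - 1)) = w (t (n - 1)) \<and> poly P (t n) = w (t n) \<and>
      is_L2_proj q (t (n - 1)) (t n) g (pderiv P)" if "n \<in> {1..N}" for n
    using partition_piece_bounds[OF partition that]
    by (metis L2_proj_interpolant_exists[OF q assms])
  then obtain P where P: "\<And>n. n \<in> {1..N} \<Longrightarrow> degree (P n) \<le> q \<and> poly (P n) (t (n - 1)) = w (t (n - 1))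
      \<and> poly (P n) (t n) = w (t n) \<and> is_L2_proj q (t (n - 1)) (t n) g (pderiv (P n))"
    by metis
  define v where "v s = (if s \<in> {0..T} then poly (P (partition_index t s)) s else 0)" for s
  have v_piece: "v s = poly (P n) s" if "n \<in> {1..N}" "s \<in> {t (n - 1)..t n}" for n s
  proof -
    have "s \<in> {0..T}"
      using that partition_piece_bounds[OF partition that(1)] by auto
    then show ?thesis
      using partition_index_glue[OF partition that, of "\<lambda>m. poly (P m)" w] P by (simp add: v_def)
  qed
  have "continuous_on (\<Union>n\<in>{1..N}. {t (n - 1)..t n}) v"
    using v_piece
    by (intro continuous_on_closed_Union) (auto intro: continuous_on_eq[OF continuous_on_poly'])
  moreover have "v 0 = w 0"
  proof -
    have "N \<ge> 1" "t 0 = 0"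
      using partition by (auto simp: is_partition_def)
    then show ?thesis
      using v_piece[of 1 0] P[of 1] partition_piece_bounds[OF partition, of 1] by auto
  qed
  ultimately have "is_Ptau q T N t w v"
    using v_piece P unfolding partition_pieces_Union[OF partition]
    by (intro is_PtauI[OF assms]) (auto simp: v_def)
  then show ?thesis
    by blast
qed

lemma is_Ptau_Ptau:
  assumes "H1 T w"
  shows "is_Ptau q T N t w (Ptau q T N t w)"
proof -
  obtain g where g: "weak_deriv_on T w g"
    using assms by (auto simp: H1_def)
  obtain v where v: "is_Ptau q T N t w v"
    using is_Ptau_exists[OF g] ..
  moreover have "v' = v" if "is_Ptau q T N t w v'" for v'
    using is_Ptau_unique[OF that v g] .
  ultimately show ?thesis
    unfolding Ptau_def by (rule theI)
qed

end

lemma (in orthogonal_poly_basis) is_Ptau_abs_le: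
  assumes "1 \<le> q" "is_partition T N t" "is_Ptau q T N t w v" "weak_deriv_on T w g" "s \<in> {0..T}"
  shows "\<bar>v s\<bar> \<le> (1 + 2 * stability_const) * C0norm T w"
proof -
  let ?n = "partition_index t s"
  note n = partition_index_piece[OF assms(2,5)]
  note bounds = partition_piece_bounds[OF assms(2) n(1)]
  obtain p where p: "\<And>s. s \<in> {t (?n - 1)..t ?n} \<Longrightarrow> v s = poly p s"
    and proj: "is_L2_proj q (t (?n - 1)) (t ?n) g (pderiv p)"
    using is_Ptau_piece[OF assms(1-4) n(1)] by auto
  have w_le: "\<bar>w u\<bar> \<le> C0norm T w" if "u \<in> {0..T}" for u
    using abs_le_C0norm[OF weak_deriv_on_continuous[OF assms(4)] that] .
  have osc: "\<bar>w u - w (t (?n - 1))\<bar> \<le> 2 * C0norm T w" if "u \<in> {t (?n - 1)..t ?n}" for u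
    using w_le[of u] w_le[of "t (?n - 1)"] that bounds by auto
  note local = weak_deriv_on_subinterval[OF assms(4) bounds(1) less_imp_le[OF bounds(2)] bounds(3)]
  have "\<bar>v s\<bar> \<le> \<bar>w (t (?n - 1))\<bar> + \<bar>poly_integral (t (?n - 1)) s (pderiv p)\<bar>"
    using is_Ptau_on_piece[OF assms(1-4) n(1) p n(2)] by (simp add: abs_triangle_ineq)
  also have "\<dots> \<le> C0norm T w + stability_const * (2 * C0norm T w)"
    using bounds
    by (intro add_mono w_le L2_proj_antiderivative_bound[OF bounds(2) proj local osc n(2)]) auto
  finally show ?thesis
    by (simp add: algebra_simps)
qed

theorem lemma4p2:
  fixes q :: nat
  assumes "q \<ge> 1"
  shows "\<exists>C>0. \<forall>T N t w. T > 0 \<longrightarrow> is_partition T N t \<longrightarrow> H1 T w \<longrightarrow>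
           C0norm T (Ptau q T N t w) \<le> C * C0norm T w"
proof -
  obtain B where "orthogonal_poly_basis q B"
    using orthogonal_poly_basis_exists by blast
  then interpret orthogonal_poly_basis q B .
  show ?thesis
  proof (intro exI[of _ "1 + 2 * stability_const"] conjI allI impI)
    show "0 < 1 + 2 * stability_const"
      using stability_const_nonneg by simp
    fix T N t w
    assume "T > 0" "is_partition T N t" "H1 T w"
    then obtain g where "weak_deriv_on T w g"
      by (auto simp: H1_def)
    then show "C0norm T (Ptau q T N t w) \<le> (1 + 2 * stability_const) * C0norm T w"
      using \<open>T > 0\<close> is_Ptau_abs_le[OF assms \<open>is_partition T N t\<close>
          is_Ptau_Ptau[OF assms \<open>is_partition T N t\<close> \<open>H1 T w\<close>]]
      by (intro C0norm_le) auto
  qed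
qed

end
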